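(* Let $\mathcal H=(M,n,\mathcal R)$ be an MMS, $S$ a closed bounded convex polytope, $x_0\in S$, and let $0<\Delta'\le\Delta$ satisfy $D_\Delta\cap S=g_{\Delta',\Delta}(D_{\Delta'}\cap S)$. If the scheduler has a winning strategy from $x_0$ in $\Sigma_{\Delta'}$, then the scheduler has a winning strategy from $x_0$ in $\Sigma_\Delta$.
   Context: An MMS is a tuple $\mathcal H=(M,n,\mathcal R)$ with $M$ a finite nonempty set of modes and $\mathcal R(m)\subseteq\mathbb R^n$ finite nonempty for each mode; let $R=\bigcup_m\mathcal R(m)$. For $\Delta>0$ let $D_\Delta=\{x_0+\Delta\sum_{r\in R}i_r r: i_r\in\mathbb N\}$, and let $g_{\Delta',\Delta}:D_{\Delta'}\to D_\Delta$ send $x_0+\Delta'\sum_{r}i_r r$ to $x_0+\Delta\sum_r i_r r$ (well defined). The schedulability game from $x_0$: in round $i\ge1$ the scheduler chooses $(m_i,t_i)\in M\times\mathbb R_{>0}$, the environment chooses $r_i\in\mathcal R(m_i)$, and $x_i=x_{i-1}+t_ir_i$; scheduler strategies map finite histories to timed moves. $\Sigma_\Delta$ is the set of scheduler strategies all of whose chosen delays are positive integer multiples of $\Delta$. A scheduler strategy is winning from $x_0$ if against every environment strategy the run satisfies $x_i\in S$ and $x_i+tr_{i+1}\in S$ for all $i\ge0$, $t\in[0,t_{i+1}]$, and $\sum_it_i=\infty$. *)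

theory Defs
  imports "HOL-Analysis.Analysis"
begin

definition MMS :: "'m set \<Rightarrow> ('m \<Rightarrow> (real^'n) set) \<Rightarrow> bool" where
  "MMS M Rr \<longleftrightarrow> finite M \<and> M \<noteq> {} \<and> (\<forall>m\<in>M. finite (Rr m) \<and> Rr m \<noteq> {})"

definition allRates :: "'m set \<Rightarrow> ('m \<Rightarrow> (real^'n) set) \<Rightarrow> (real^'n) set" where
  "allRates M Rr = (\<Union>m\<in>M. Rr m)"

definition grid :: "'m set \<Rightarrow> ('m \<Rightarrow> (real^'n) set) \<Rightarrow> real^'n \<Rightarrow> real \<Rightarrow> (real^'n) set" where
  "grid M Rr x0 \<Delta> = {x0 + \<Delta> *\<^sub>R (\<Sum>r\<in>allRates M Rr. real (i r) *\<^sub>R r) | i :: real^'n \<Rightarrow> nat. True}"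

definition gmap :: "'m set \<Rightarrow> ('m \<Rightarrow> (real^'n) set) \<Rightarrow> real^'n \<Rightarrow> real \<Rightarrow> real \<Rightarrow> real^'n \<Rightarrow> real^'n" where
  "gmap M Rr x0 \<Delta>' \<Delta> y =
     (let i = (SOME i :: real^'n \<Rightarrow> nat. y = x0 + \<Delta>' *\<^sub>R (\<Sum>r\<in>allRates M Rr. real (i r) *\<^sub>R r))
      in x0 + \<Delta> *\<^sub>R (\<Sum>r\<in>allRates M Rr. real (i r) *\<^sub>R r))"

(* Histories: lists of completed rounds (m_i, t_i, r_i). *)
type_synonym ('m, 'n) history = "('m \<times> real \<times> (real^'n)) list"

definition sched_strategy :: "'m set \<Rightarrow> (('m, 'n) history \<Rightarrow> 'm \<times> real) \<Rightarrow> bool" where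
  "sched_strategy M \<sigma> \<longleftrightarrow> (\<forall>h. fst (\<sigma> h) \<in> M \<and> snd (\<sigma> h) > 0)"

definition env_strategy :: "'m set \<Rightarrow> ('m \<Rightarrow> (real^'n) set)
      \<Rightarrow> (('m, 'n) history \<Rightarrow> 'm \<times> real \<Rightarrow> real^'n) \<Rightarrow> bool" where
  "env_strategy M Rr \<epsilon> \<longleftrightarrow> (\<forall>h m t. m \<in> M \<longrightarrow> \<epsilon> h (m, t) \<in> Rr m)"

definition Sigma_grid :: "'m set \<Rightarrow> real \<Rightarrow> (('m, 'n) history \<Rightarrow> 'm \<times> real) set" where
  "Sigma_grid M \<Delta> = {\<sigma>. sched_strategy M \<sigma> \<and> (\<forall>h. \<exists>k::nat. k \<ge> 1 \<and> snd (\<sigma> h) = real k * \<Delta>)}"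

fun play :: "(('m, 'n) history \<Rightarrow> 'm \<times> real) \<Rightarrow> (('m, 'n) history \<Rightarrow> 'm \<times> real \<Rightarrow> real^'n)
      \<Rightarrow> nat \<Rightarrow> ('m, 'n) history" where
  "play \<sigma> \<epsilon> 0 = []"
| "play \<sigma> \<epsilon> (Suc k) = (let h = play \<sigma> \<epsilon> k in h @ [(fst (\<sigma> h), snd (\<sigma> h), \<epsilon> h (\<sigma> h))])"

(* delay t_{i+1} and rate r_{i+1} of round i+1 (0-based index i) *)
definition delay :: "(('m, 'n) history \<Rightarrow> 'm \<times> real) \<Rightarrow> (('m, 'n) history \<Rightarrow> 'm \<times> real \<Rightarrow> real^'n)
      \<Rightarrow> nat \<Rightarrow> real" where
  "delay \<sigma> \<epsilon> i = snd (\<sigma> (play \<sigma> \<epsilon> i))"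

definition rate :: "(('m, 'n) history \<Rightarrow> 'm \<times> real) \<Rightarrow> (('m, 'n) history \<Rightarrow> 'm \<times> real \<Rightarrow> real^'n)
      \<Rightarrow> nat \<Rightarrow> real^'n" where
  "rate \<sigma> \<epsilon> i = \<epsilon> (play \<sigma> \<epsilon> i) (\<sigma> (play \<sigma> \<epsilon> i))"

definition pos :: "real^'n \<Rightarrow> (('m, 'n) history \<Rightarrow> 'm \<times> real) \<Rightarrow> (('m, 'n) history \<Rightarrow> 'm \<times> real \<Rightarrow> real^'n)
      \<Rightarrow> nat \<Rightarrow> real^'n" where
  "pos x0 \<sigma> \<epsilon> i = x0 + (\<Sum>j<i. delay \<sigma> \<epsilon> j *\<^sub>R rate \<sigma> \<epsilon> j)"

definition winning :: "'m set \<Rightarrow> ('m \<Rightarrow> (real^'n) set) \<Rightarrow> (real^'n) set \<Rightarrow> real^'n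
      \<Rightarrow> (('m, 'n) history \<Rightarrow> 'm \<times> real) \<Rightarrow> bool" where
  "winning M Rr S x0 \<sigma> \<longleftrightarrow> sched_strategy M \<sigma> \<and>
     (\<forall>\<epsilon>. env_strategy M Rr \<epsilon> \<longrightarrow>
        (\<forall>i. pos x0 \<sigma> \<epsilon> i \<in> S \<and>
             (\<forall>t\<in>{0..delay \<sigma> \<epsilon> i}. pos x0 \<sigma> \<epsilon> i + t *\<^sub>R rate \<sigma> \<epsilon> i \<in> S)) \<and>
        filterlim (\<lambda>k. \<Sum>j<k. delay \<sigma> \<epsilon> j) at_top sequentially)"

end

theory Submission
  imports Defs
begin

text \<open>Speeding every delay of a \<open>\<Delta>'\<close>-strategy up by the factor \<open>c = \<Delta>/\<Delta>'\<close> yields a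
\<open>\<Delta>\<close>-strategy whose play against any environment is the play of the original strategy
against a correspondingly rescaled environment, with every position \<open>x\<close> replaced by
\<open>x0 + c (x - x0)\<close>. Positions of the original play lie on \<open>D\<^sub>\<Delta>'\<close>, and there this
homothety coincides with \<open>g\<^sub>\<Delta>',\<^sub>\<Delta>\<close>, so the hypothesis on the grids keeps them in \<open>S\<close>;
convexity of \<open>S\<close> then keeps the whole straight-line segments in \<open>S\<close>, and the total
elapsed time is multiplied by \<open>c > 0\<close>, so it still diverges.\<close>

definition rescale_history :: "real \<Rightarrow> ('m, 'n) history \<Rightarrow> ('m, 'n) history" where
  "rescale_history c = map (\<lambda>(m, t, r). (m, c * t, r))"

definition rescale_sched ::
    "real \<Rightarrow> (('m, 'n) history \<Rightarrow> 'm \<times> real) \<Rightarrow> ('m, 'n) history \<Rightarrow> 'm \<times> real" where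
  "rescale_sched c \<sigma> h = (let (m, t) = \<sigma> (rescale_history (inverse c) h) in (m, c * t))"

definition rescale_env ::
    "real \<Rightarrow> (('m, 'n) history \<Rightarrow> 'm \<times> real \<Rightarrow> real^'n)
       \<Rightarrow> ('m, 'n) history \<Rightarrow> 'm \<times> real \<Rightarrow> real^'n" where
  "rescale_env c \<epsilon> h = (\<lambda>(m, t). \<epsilon> (rescale_history c h) (m, c * t))"

lemma rescale_history_inverse:
  assumes "c \<noteq> 0"
  shows "rescale_history (inverse c) (rescale_history c h) = h"
  using assms by (induction h) (auto simp: rescale_history_def)

lemma play_rescale_sched:
  assumes "c \<noteq> 0"
  shows "play (rescale_sched c \<sigma>) \<epsilon> k = rescale_history c (play \<sigma> (rescale_env c \<epsilon>) k)"
proof (induction k)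
  case 0
  show ?case by (simp add: rescale_history_def)
next
  case (Suc k)
  then show ?case
    by (simp add: Let_def rescale_sched_def rescale_env_def rescale_history_inverse[OF assms]
        split: prod.split) (simp add: rescale_history_def)
qed

lemma sched_move_rescale:
  assumes "c \<noteq> 0"
  shows "rescale_sched c \<sigma> (play (rescale_sched c \<sigma>) \<epsilon> i)
       = (fst (\<sigma> (play \<sigma> (rescale_env c \<epsilon>) i)), c * snd (\<sigma> (play \<sigma> (rescale_env c \<epsilon>) i)))"
  by (simp add: play_rescale_sched[OF assms] rescale_sched_def rescale_history_inverse[OF assms]
      split: prod.split)

lemma delay_rescale_sched:
  assumes "c \<noteq> 0"
  shows "delay (rescale_sched c \<sigma>) \<epsilon> i = c * delay \<sigma> (rescale_env c \<epsilon>) i"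
  by (simp add: delay_def sched_move_rescale[OF assms])

lemma rate_rescale_sched:
  assumes "c \<noteq> 0"
  shows "rate (rescale_sched c \<sigma>) \<epsilon> i = rate \<sigma> (rescale_env c \<epsilon>) i"
  unfolding rate_def sched_move_rescale[OF assms]
  by (simp add: play_rescale_sched[OF assms] rescale_env_def split: prod.split)

lemma pos_rescale_sched:
  assumes "c \<noteq> 0"
  shows "pos x0 (rescale_sched c \<sigma>) \<epsilon> i = x0 + c *\<^sub>R (pos x0 \<sigma> (rescale_env c \<epsilon>) i - x0)"
  by (simp add: pos_def delay_rescale_sched[OF assms] rate_rescale_sched[OF assms] scaleR_sum_right)

lemma env_strategy_rescale_env:
  "env_strategy M Rr \<epsilon> \<Longrightarrow> env_strategy M Rr (rescale_env c \<epsilon>)"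
  by (simp add: env_strategy_def rescale_env_def)

lemma rescale_sched_in_Sigma_grid:
  fixes \<sigma> :: "('m, 'n) history \<Rightarrow> 'm \<times> real"
  assumes "\<sigma> \<in> Sigma_grid M \<Delta>'" "0 < \<Delta>'" "0 < \<Delta>"
  shows "rescale_sched (\<Delta> / \<Delta>') \<sigma> \<in> Sigma_grid M \<Delta>"
  unfolding Sigma_grid_def sched_strategy_def
proof (intro CollectI conjI allI)
  fix h
  let ?h = "rescale_history (inverse (\<Delta> / \<Delta>')) h :: ('m, 'n) history"
  obtain m t where mt: "\<sigma> ?h = (m, t)"
    by (cases "\<sigma> ?h")
  have "fst (\<sigma> ?h) \<in> M" "0 < snd (\<sigma> ?h)" "\<exists>k::nat. k \<ge> 1 \<and> snd (\<sigma> ?h) = real k * \<Delta>'"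
    using assms(1) unfolding Sigma_grid_def sched_strategy_def by blast+
  then have "m \<in> M" "0 < t" and k: "\<exists>k::nat. k \<ge> 1 \<and> t = real k * \<Delta>'"
    unfolding mt fst_conv snd_conv .
  have scaled: "rescale_sched (\<Delta> / \<Delta>') \<sigma> h = (m, \<Delta> / \<Delta>' * t)"
    unfolding rescale_sched_def mt by simp
  show "fst (rescale_sched (\<Delta> / \<Delta>') \<sigma> h) \<in> M"
    using \<open>m \<in> M\<close> by (simp add: scaled)
  show "0 < snd (rescale_sched (\<Delta> / \<Delta>') \<sigma> h)"
    using \<open>0 < t\<close> assms(2,3) by (simp add: scaled)
  show "\<exists>k::nat. k \<ge> 1 \<and> snd (rescale_sched (\<Delta> / \<Delta>') \<sigma> h) = real k * \<Delta>"
    using k assms(2) by (auto simp: scaled)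
qed

lemma grid_add_multiple:
  assumes "y \<in> grid M Rr x0 D" "r \<in> allRates M Rr" "finite (allRates M Rr)"
  shows "y + (real k * D) *\<^sub>R r \<in> grid M Rr x0 D"
proof -
  obtain i where y: "y = x0 + D *\<^sub>R (\<Sum>r\<in>allRates M Rr. real (i r) *\<^sub>R r)"
    using assms(1) unfolding grid_def by blast
  define i' where "i' = i(r := i r + k)"
  have "(\<Sum>r'\<in>allRates M Rr. real (i' r') *\<^sub>R r')
      = (\<Sum>r'\<in>allRates M Rr. real (i r') *\<^sub>R r' + (if r' = r then real k *\<^sub>R r' else 0))"
    by (rule sum.cong) (auto simp: i'_def scaleR_add_left)
  also have "\<dots> = (\<Sum>r'\<in>allRates M Rr. real (i r') *\<^sub>R r') + real k *\<^sub>R r"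
    using assms(2,3) by (simp add: sum.distrib)
  finally have "y + (real k * D) *\<^sub>R r = x0 + D *\<^sub>R (\<Sum>r'\<in>allRates M Rr. real (i' r') *\<^sub>R r')"
    by (simp add: y scaleR_add_right)
  then show ?thesis unfolding grid_def by blast
qed

lemma gmap_on_grid:
  assumes "y \<in> grid M Rr x0 D'" "D' \<noteq> 0"
  shows "gmap M Rr x0 D' D y = x0 + (D / D') *\<^sub>R (y - x0)"
proof -
  let ?represents = "\<lambda>i. y = x0 + D' *\<^sub>R (\<Sum>r\<in>allRates M Rr. real (i r) *\<^sub>R r)"
  define i where "i = Eps ?represents"
  have "\<exists>i. ?represents i"
    using assms(1) unfolding grid_def by blast
  then have y: "?represents i"
    unfolding i_def by (rule someI_ex)
  have "gmap M Rr x0 D' D y = x0 + D *\<^sub>R (\<Sum>r\<in>allRates M Rr. real (i r) *\<^sub>R r)"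
    unfolding gmap_def i_def Let_def ..
  then show ?thesis
    using assms(2) by (simp add: y)
qed

lemma pos_Suc: "pos x0 \<sigma> \<epsilon> (Suc i) = pos x0 \<sigma> \<epsilon> i + delay \<sigma> \<epsilon> i *\<^sub>R rate \<sigma> \<epsilon> i"
  by (simp add: pos_def add.assoc)

lemma pos_in_grid:
  assumes "\<sigma> \<in> Sigma_grid M D" "env_strategy M Rr \<epsilon>" "finite (allRates M Rr)"
  shows "pos x0 \<sigma> \<epsilon> i \<in> grid M Rr x0 D"
proof (induction i)
  case 0
  show ?case by (auto simp: grid_def pos_def intro!: exI[of _ "\<lambda>_. 0"])
next
  case (Suc i)
  obtain k :: nat where k: "delay \<sigma> \<epsilon> i = real k * D"
    using assms(1) unfolding Sigma_grid_def delay_def by blast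
  have "fst (\<sigma> (play \<sigma> \<epsilon> i)) \<in> M"
    using assms(1) unfolding Sigma_grid_def sched_strategy_def by blast
  then have "rate \<sigma> \<epsilon> i \<in> allRates M Rr"
    using assms(2) unfolding rate_def env_strategy_def allRates_def
    by (metis UN_iff prod.collapse)
  moreover have "pos x0 \<sigma> \<epsilon> (Suc i) = pos x0 \<sigma> \<epsilon> i + (real k * D) *\<^sub>R rate \<sigma> \<epsilon> i"
    by (simp add: pos_Suc k)
  ultimately show ?case
    using grid_add_multiple[OF Suc _ assms(3)] by simp
qed

lemma convex_segment_step:
  assumes "convex S" "p \<in> S" "p + d *\<^sub>R r \<in> S" "0 \<le> t" "t \<le> d"
  shows "p + t *\<^sub>R r \<in> S"
proof (cases "d = 0")
  case True
  then show ?thesis using assms by simp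
next
  case False
  then have "p + t *\<^sub>R r = (1 - t / d) *\<^sub>R p + (t / d) *\<^sub>R (p + d *\<^sub>R r)"
    by (simp add: algebra_simps)
  moreover have "0 \<le> t / d" "t / d \<le> 1"
    using assms(4,5) False by auto
  ultimately show ?thesis
    using convexD[OF assms(1-3), of "1 - t / d" "t / d"] by simp
qed

lemma winning_convexI:
  assumes "convex S" "sched_strategy M \<sigma>"
    and positions: "\<And>\<epsilon> i. env_strategy M Rr \<epsilon> \<Longrightarrow> pos x0 \<sigma> \<epsilon> i \<in> S"
    and diverges: "\<And>\<epsilon>. env_strategy M Rr \<epsilon> \<Longrightarrow>
        filterlim (\<lambda>k. \<Sum>j<k. delay \<sigma> \<epsilon> j) at_top sequentially"
  shows "winning M Rr S x0 \<sigma>"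
proof -
  have "pos x0 \<sigma> \<epsilon> i + t *\<^sub>R rate \<sigma> \<epsilon> i \<in> S"
    if "env_strategy M Rr \<epsilon>" "t \<in> {0..delay \<sigma> \<epsilon> i}" for \<epsilon> i t
  proof (rule convex_segment_step[OF assms(1)])
    show "pos x0 \<sigma> \<epsilon> i \<in> S"
      using positions[OF that(1)] .
    show "pos x0 \<sigma> \<epsilon> i + delay \<sigma> \<epsilon> i *\<^sub>R rate \<sigma> \<epsilon> i \<in> S"
      using positions[OF that(1), of "Suc i"] by (simp add: pos_Suc)
  qed (use that(2) in auto)
  then show ?thesis
    unfolding winning_def using assms by blast
qed

lemma sum_delay_rescale_sched_at_top:
  assumes "0 < c" "filterlim (\<lambda>k. \<Sum>j<k. delay \<sigma> (rescale_env c \<epsilon>) j) at_top sequentially"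
  shows "filterlim (\<lambda>k. \<Sum>j<k. delay (rescale_sched c \<sigma>) \<epsilon> j) at_top sequentially"
  using assms by (simp add: delay_rescale_sched sum_distrib_left[symmetric]
      filterlim_tendsto_pos_mult_at_top[OF tendsto_const])

lemma winning_rescale_sched:
  assumes "convex S" "finite (allRates M Rr)" "0 < \<Delta>'" "0 < \<Delta>"
    and grids: "grid M Rr x0 \<Delta> \<inter> S = gmap M Rr x0 \<Delta>' \<Delta> ` (grid M Rr x0 \<Delta>' \<inter> S)"
    and \<sigma>': "\<sigma>' \<in> Sigma_grid M \<Delta>'" and win: "winning M Rr S x0 \<sigma>'"
  shows "winning M Rr S x0 (rescale_sched (\<Delta> / \<Delta>') \<sigma>')"
proof (rule winning_convexI[OF assms(1)])
  define c where "c = \<Delta> / \<Delta>'"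
  have c: "0 < c" using assms(3,4) by (simp add: c_def)
  show "sched_strategy M (rescale_sched (\<Delta> / \<Delta>') \<sigma>')"
    using rescale_sched_in_Sigma_grid[OF \<sigma>' assms(3,4)] unfolding Sigma_grid_def by blast
  fix \<epsilon> assume "env_strategy M Rr \<epsilon>"
  then have env: "env_strategy M Rr (rescale_env c \<epsilon>)" by (rule env_strategy_rescale_env)
  show "pos x0 (rescale_sched (\<Delta> / \<Delta>') \<sigma>') \<epsilon> i \<in> S" for i
  proof -
    let ?x = "pos x0 \<sigma>' (rescale_env c \<epsilon>) i"
    have x: "?x \<in> grid M Rr x0 \<Delta>' \<inter> S"
      using pos_in_grid[OF \<sigma>' env assms(2)] win env unfolding winning_def by blast
    then have "gmap M Rr x0 \<Delta>' \<Delta> ?x \<in> S"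
      using grids by blast
    also have "gmap M Rr x0 \<Delta>' \<Delta> ?x = x0 + c *\<^sub>R (?x - x0)"
      using x assms(3) by (simp add: gmap_on_grid c_def)
    also have "\<dots> = pos x0 (rescale_sched c \<sigma>') \<epsilon> i"
      using c by (simp add: pos_rescale_sched)
    finally show ?thesis unfolding c_def .
  qed
  show "filterlim (\<lambda>k. \<Sum>j<k. delay (rescale_sched (\<Delta> / \<Delta>') \<sigma>') \<epsilon> j) at_top sequentially"
    using sum_delay_rescale_sched_at_top[OF c] win env unfolding winning_def c_def by blast
qed

theorem lemma6:
  fixes M :: "'m set" and Rr :: "'m \<Rightarrow> (real^'n) set" and S :: "(real^'n) set"
    and x0 :: "real^'n" and \<Delta> \<Delta>' :: real
  assumes "MMS M Rr"
    and "polytope S"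
    and "x0 \<in> S"
    and "0 < \<Delta>'" and "\<Delta>' \<le> \<Delta>"
    and "grid M Rr x0 \<Delta> \<inter> S = gmap M Rr x0 \<Delta>' \<Delta> ` (grid M Rr x0 \<Delta>' \<inter> S)"
    and "\<exists>\<sigma>\<in>Sigma_grid M \<Delta>'. winning M Rr S x0 \<sigma>"
  shows "\<exists>\<sigma>\<in>Sigma_grid M \<Delta>. winning M Rr S x0 \<sigma>"
proof -
  obtain \<sigma>' where \<sigma>': "\<sigma>' \<in> Sigma_grid M \<Delta>'" and win: "winning M Rr S x0 \<sigma>'"
    using assms(7) by blast
  have \<Delta>: "0 < \<Delta>" using assms(4,5) by linarith
  have "finite (allRates M Rr)"
    using assms(1) unfolding MMS_def allRates_def by auto
  then have "winning M Rr S x0 (rescale_sched (\<Delta> / \<Delta>') \<sigma>')"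
    using winning_rescale_sched[OF polytope_imp_convex[OF assms(2)] _ assms(4) \<Delta> assms(6) \<sigma>' win]
    by blast
  then show ?thesis
    using rescale_sched_in_Sigma_grid[OF \<sigma>' assms(4) \<Delta>] by blast
qed

end
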